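(* Let $A\in\mathbb{C}^{n\times n}$ be Hermitian, $f(x)=\frac12\|xx^*-A\|_F^2$ with $\nabla f(x)=2(xx^*-A)x$, and let $x_0\in\mathbb{C}^{n\times p}_*$. Consider two iterations started from the same point and using the same step sizes $\alpha_k>0$: (i) (Euclidean nonlinear CG) $\eta_0=-\nabla f(x_0)$, $x_{k+1}=x_k+\alpha_k\eta_k$, $\eta_{k+1}=-\nabla f(x_{k+1})+\beta_{k+1}\eta_k$ with either $\beta_{k+1}=\max\!\big(0,\frac{\langle\nabla f(x_{k+1}),\nabla f(x_{k+1})-\nabla f(x_k)\rangle}{\langle\nabla f(x_k),\nabla f(x_k)\rangle}\big)$ (Polak–Ribière$_+$) or $\beta_{k+1}=\frac{\langle\nabla f(x_{k+1}),\nabla f(x_{k+1})\rangle}{\langle\nabla f(x_k),\nabla f(x_k)\rangle}$ (Fletcher–Reeves); (ii) (lifted Riemannian CG on $\mathbb{C}^{n\times p}_*/\mathcal O_p$) $y_0=x_0$, $\zeta_0=-\nabla f(y_0)$, $y_{k+1}=y_k+\alpha_k\zeta_k$, $\zeta_{k+1}=-\nabla f(y_{k+1})+\gamma_{k+1}P^{\mathcal H}_{y_{k+1}}(\zeta_k)$, with either $\gamma_{k+1}=\max\!\big(0,\frac{\langle\nabla f(y_{k+1}),\nabla f(y_{k+1})-P^{\mathcal H}_{y_{k+1}}(\nabla f(y_k))\rangle}{\langle\nabla f(y_k),\nabla f(y_k)\rangle}\big)$ (PR$_+$) or $\gamma_{k+1}=\frac{\langle\nabla f(y_{k+1}),\nabla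 f(y_{k+1})\rangle}{\langle\nabla f(y_k),\nabla f(y_k)\rangle}$ (FR), the same rule being used in (i) and (ii). Assume all iterates lie in $\mathbb{C}^{n\times p}_*$ and all denominators are nonzero. Then $y_k=x_k$ and $\zeta_k=\eta_k$ for all $k\ge0$.
   Context: $\mathbb{C}^{n\times p}_*=\{X\in\mathbb{C}^{n\times p}:\operatorname{rank}X=p\}$; $\mathcal O_p$ is the group of $p\times p$ unitary matrices acting by right multiplication. $\mathbb{C}^{n\times p}$ is a real vector space with inner product $\langle U,V\rangle=\Re\operatorname{tr}(U^*V)$. For $y\in\mathbb{C}^{n\times p}_*$ the horizontal space is $\mathcal H_y=\{z: y^*z=z^*y\}$, and the orthogonal projection onto it is $P^{\mathcal H}_y(z)=z-y\Omega$ where $\Omega$ is the unique solution of $\Omega\,y^*y+y^*y\,\Omega=y^*z-z^*y$. *)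

theory Defs
  imports "HOL-Analysis.Analysis"
begin

text \<open>Complex n x p matrices are rendered as complex^'p^'n (rows indexed by 'n, columns by 'p).\<close>

definition adj :: "complex^'p^'n \<Rightarrow> complex^'n^'p" where
  "adj X = (\<chi> i j. cnj (X $ j $ i))"

text \<open>Real inner product  Re tr(U^* V).\<close>
definition rinner :: "complex^'p^'n \<Rightarrow> complex^'p^'n \<Rightarrow> real" where
  "rinner U V = Re (\<Sum>i\<in>UNIV. \<Sum>j\<in>UNIV. cnj (U $ i $ j) * V $ i $ j)"

text \<open>Membership in C^{n x p}_* : rank X = p (rank over the field of complex numbers).\<close>
definition full_rank :: "complex^'p^'n \<Rightarrow> bool" where
  "full_rank X \<longleftrightarrow> rank X = CARD('p)"

definition hermitian :: "complex^'n^'n \<Rightarrow> bool" where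
  "hermitian A \<longleftrightarrow> adj A = A"

text \<open>Gradient of f(x) = 1/2 Frobenius-norm-squared of (x x^* - A), namely 2 (x x^* - A) x.\<close>
definition gradF :: "complex^'n^'n \<Rightarrow> complex^'p^'n \<Rightarrow> complex^'p^'n" where
  "gradF A x = 2 *\<^sub>R ((x ** adj x - A) ** x)"

definition Omega :: "complex^'p^'n \<Rightarrow> complex^'p^'n \<Rightarrow> complex^'p^'p" where
  "Omega y z = (THE W. W ** (adj y ** y) + (adj y ** y) ** W = adj y ** z - adj z ** y)"

text \<open>Orthogonal projection onto the horizontal space at y.\<close>
definition projH :: "complex^'p^'n \<Rightarrow> complex^'p^'n \<Rightarrow> complex^'p^'n" where
  "projH y z = z - y ** Omega y z"

text \<open>CG coefficient: if pr then Polak-Ribiere+ else Fletcher-Reeves.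
  gnew = new gradient, gold' = (possibly transported) old gradient in the numerator,
  gold = old gradient in the denominator.\<close>
definition cg_coeff :: "bool \<Rightarrow> complex^'p^'n \<Rightarrow> complex^'p^'n \<Rightarrow> complex^'p^'n \<Rightarrow> real" where
  "cg_coeff pr gnew gold' gold =
     (if pr then max 0 (rinner gnew (gnew - gold') / rinner gold gold)
      else rinner gnew gnew / rinner gold gold)"

end

theory Submission
  imports Defs
begin

text \<open>The lifted Riemannian directions stay horizontal: \<open>\<nabla>f(y) = 2(yy\<^sup>* - A)y\<close> is horizontal
  because \<open>yy\<^sup>* - A\<close> is Hermitian, and a direction \<open>\<zeta>\<close> horizontal at \<open>y\<close> is still horizontal at
  \<open>y + \<alpha>\<zeta>\<close>. On horizontal vectors \<open>P\<^sup>H\<close> is the identity, since the Lyapunov equation defining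
  \<open>\<Omega>\<close> has only the trivial solution when its right-hand side vanishes; and \<open>P\<^sup>H\<close> is an orthogonal
  projection, because \<open>\<Omega>\<close> is skew-Hermitian. Hence the transported quantities in the Riemannian
  update can be replaced by untransported ones, both iterations compute the same coefficients,
  and they coincide by induction.\<close>

lemma matrix_add_rdistrib: "(A + B) ** C = A ** C + B ** (C::'a::semiring_1^'c^'b)"
  by (simp add: matrix_matrix_mult_def vec_eq_iff distrib_right sum.distrib)

lemma matrix_uminus_left: "(- A) ** C = - (A ** (C::'a::ring_1^'c^'b))"
  by (simp add: matrix_matrix_mult_def vec_eq_iff sum_negf)

lemma matrix_uminus_right: "C ** (- A) = - (C ** (A::'a::ring_1^'c^'b))"
  by (simp add: matrix_matrix_mult_def vec_eq_iff sum_negf)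

lemma rank_eq_ncols_imp_inj:
  fixes A :: "'a::field^'n^'m"
  assumes "rank A = CARD('n)"
  shows "inj ((*v) A)"
proof -
  have "vec.dim (rows A) = vec.dim (UNIV::('a^'n) set)"
    using assms by (metis row_rank_def_gen vec_dim_card)
  then have "vec.span (rows A) = UNIV"
    by (metis vec.dim_UNIV vec.dim_eq_full vec.dimension_def)
  then show ?thesis
    using matrix_left_invertible_span_rows_gen matrix_left_invertible_injective by metis
qed

lemma adj_adj [simp]: "adj (adj X) = X"
  by (simp add: adj_def vec_eq_iff)

lemma adj_matrix_mult: "adj (A ** B) = adj B ** adj (A::complex^'b^'a)"
  by (simp add: adj_def matrix_matrix_mult_def vec_eq_iff mult.commute)

lemma adj_add [simp]: "adj (A + B) = adj A + adj B"
  by (simp add: adj_def vec_eq_iff)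

lemma adj_diff [simp]: "adj (A - B) = adj A - adj B"
  by (simp add: adj_def vec_eq_iff)

lemma adj_uminus [simp]: "adj (- A) = - adj A"
  by (simp add: adj_def vec_eq_iff)

lemma adj_scaleR [simp]: "adj (c *\<^sub>R A) = c *\<^sub>R adj A"
  by (simp add: adj_def vec_eq_iff)

lemma trace_adj: "trace (adj X) = cnj (trace X)"
  by (simp add: trace_def adj_def)

lemma rinner_eq_Re_trace: "rinner U V = Re (trace (adj U ** V))"
  unfolding rinner_def trace_def
  by (simp add: adj_def matrix_matrix_mult_def, subst sum.swap, simp)

lemma rinner_diff_right: "rinner U (V - W) = rinner U V - rinner U W"
  by (simp add: rinner_def right_diff_distrib sum_subtractf)

lemma rinner_self: "rinner X X = (\<Sum>i\<in>UNIV. \<Sum>j\<in>UNIV. (cmod (X $ i $ j))\<^sup>2)"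
  unfolding rinner_def by (simp add: cmod_power2 power2_eq_square[symmetric])

lemma rinner_self_nonneg: "rinner X X \<ge> 0"
  unfolding rinner_self by (intro sum_nonneg) auto

lemma rinner_self_eq_0: "rinner X X = 0 \<Longrightarrow> X = 0"
  unfolding rinner_self by (simp add: sum_nonneg_eq_0_iff sum_nonneg vec_eq_iff)

lemma full_rank_mult_eq_0:
  fixes y :: "complex^'p^'n" and W :: "complex^'q^'p"
  assumes "full_rank y" and "y ** W = 0"
  shows "W = 0"
proof -
  have inj: "inj ((*v) y)"
    using assms(1) rank_eq_ncols_imp_inj unfolding full_rank_def by blast
  have "y *v column j W = 0" for j
    using assms(2) by (simp add: vec_eq_iff matrix_matrix_mult_def matrix_vector_mult_def column_def)
  then have "column j W = 0" for j
    using inj by (metis injD matrix_vector_mult_0_right)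
  then show ?thesis
    by (simp add: vec_eq_iff column_def)
qed

definition lyap :: "complex^'p^'n \<Rightarrow> complex^'p^'p \<Rightarrow> complex^'p^'p" where
  "lyap y W = W ** (adj y ** y) + (adj y ** y) ** W"

lemma linear_lyap: "linear (lyap y)"
proof (rule linearI)
  show "lyap y (V + W) = lyap y V + lyap y W" for V W
    unfolding lyap_def matrix_add_rdistrib matrix_add_ldistrib by (simp only: ac_simps)
  show "lyap y (c *\<^sub>R W) = c *\<^sub>R lyap y W" for c W
    unfolding lyap_def scalar_matrix_assoc[symmetric] matrix_scalar_ac
    by (simp only: scalar_matrix_assoc scaleR_add_right)
qed

lemma rinner_lyap_self:
  "rinner W (lyap y W) = rinner (W ** adj y) (W ** adj y) + rinner (y ** W) (y ** W)"
proof -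
  have "trace (adj W ** (W ** (adj y ** y))) = trace (adj (W ** adj y) ** (W ** adj y))"
    using trace_mul_sym[of "adj W ** W ** adj y" y]
    by (simp add: adj_matrix_mult matrix_mul_assoc)
  moreover have "trace (adj W ** ((adj y ** y) ** W)) = trace (adj (y ** W) ** (y ** W))"
    by (simp add: adj_matrix_mult matrix_mul_assoc)
  ultimately show ?thesis
    by (simp add: rinner_eq_Re_trace lyap_def matrix_add_ldistrib trace_add)
qed

lemma lyap_eq_0:
  assumes "full_rank y" and "lyap y W = 0"
  shows "W = 0"
proof -
  have "rinner (W ** adj y) (W ** adj y) + rinner (y ** W) (y ** W) = 0"
    using assms(2) rinner_lyap_self[of W y] by (simp add: rinner_def)
  then have "rinner (y ** W) (y ** W) = 0"
    using rinner_self_nonneg[of "W ** adj y"] rinner_self_nonneg[of "y ** W"] by linarith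
  then show ?thesis
    using full_rank_mult_eq_0[OF assms(1)] rinner_self_eq_0 by blast
qed

lemma bij_lyap:
  assumes "full_rank y"
  shows "bij (lyap y)"
proof -
  have "inj (lyap y)"
    using linear_lyap lyap_eq_0[OF assms] by (metis linear_inj_iff_eq_0)
  then show ?thesis
    using linear_inj_imp_surj[OF linear_lyap] by (simp add: bij_def)
qed

lemma Omega_unique:
  assumes "full_rank y" and W: "lyap y W = adj y ** z - adj z ** y"
  shows "Omega y z = W"
  unfolding Omega_def lyap_def[symmetric]
proof (rule the_equality)
  show "lyap y W = adj y ** z - adj z ** y"
    by (rule W)
  show "V = W" if "lyap y V = adj y ** z - adj z ** y" for V
    using injD[OF bij_is_inj[OF bij_lyap[OF assms(1)]]] that W by simp
qed

lemma Omega_adj: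
  assumes "full_rank y"
  shows "adj (Omega y z) = - Omega y z"
proof -
  obtain W where W: "lyap y W = adj y ** z - adj z ** y"
    using bij_lyap[OF assms] by (metis bij_pointE)
  have "lyap y (- adj W) = - adj (lyap y W)"
    by (simp add: lyap_def adj_matrix_mult matrix_mul_assoc matrix_uminus_left matrix_uminus_right)
  also have "\<dots> = lyap y W"
    by (simp add: W adj_matrix_mult)
  finally have "W = - adj W"
    using bij_lyap[OF assms] by (metis bij_is_inj injD)
  then show ?thesis
    using Omega_unique[OF assms W] by (metis minus_minus)
qed

definition horizontal :: "complex^'p^'n \<Rightarrow> complex^'p^'n \<Rightarrow> bool" where
  "horizontal y z \<longleftrightarrow> adj y ** z = adj z ** y"

lemma horizontal_add: "horizontal y a \<Longrightarrow> horizontal y b \<Longrightarrow> horizontal y (a + b)"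
  by (simp add: horizontal_def matrix_add_ldistrib matrix_add_rdistrib)

lemma horizontal_uminus: "horizontal y a \<Longrightarrow> horizontal y (- a)"
  by (simp add: horizontal_def matrix_uminus_left matrix_uminus_right)

lemma horizontal_scaleR: "horizontal y a \<Longrightarrow> horizontal y (c *\<^sub>R a)"
  by (simp add: horizontal_def scalar_matrix_assoc[symmetric] matrix_scalar_ac)

lemma horizontal_along: "horizontal y z \<Longrightarrow> horizontal (y + c *\<^sub>R z) z"
  by (simp add: horizontal_def matrix_add_ldistrib matrix_add_rdistrib
      scalar_matrix_assoc[symmetric] matrix_scalar_ac)

lemma horizontal_gradF:
  assumes "hermitian A"
  shows "horizontal x (gradF A x)"
proof -
  have "adj (x ** adj x - A) = x ** adj x - A"
    using assms by (simp add: hermitian_def adj_matrix_mult)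
  then show ?thesis
    unfolding horizontal_def gradF_def
    by (simp add: scalar_matrix_assoc[symmetric] matrix_scalar_ac adj_matrix_mult matrix_mul_assoc)
qed

lemma projH_horizontal:
  assumes "full_rank y" and "horizontal y z"
  shows "projH y z = z"
proof -
  have "Omega y z = 0"
    using assms by (intro Omega_unique) (simp_all add: lyap_def horizontal_def)
  then show ?thesis
    by (simp add: projH_def)
qed

lemma rinner_projH:
  assumes "full_rank y" and "horizontal y g"
  shows "rinner g (projH y z) = rinner g z"
proof -
  let ?H = "adj g ** y" and ?O = "Omega y z"
  have H_adj: "adj ?H = ?H"
    using assms(2) by (simp add: horizontal_def adj_matrix_mult)
  have "cnj (trace (?H ** ?O)) = trace (adj ?O ** adj ?H)"
    by (simp only: trace_adj[symmetric] adj_matrix_mult)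
  also have "\<dots> = trace (- (?O ** ?H))"
    by (simp only: H_adj Omega_adj[OF assms(1)] matrix_uminus_left)
  also have "\<dots> = - trace (?O ** ?H)"
    by (simp add: trace_def sum_negf)
  also have "\<dots> = - trace (?H ** ?O)"
    by (simp only: trace_mul_sym[of ?O ?H])
  \<comment> \<open>a Hermitian times a skew-Hermitian matrix has purely imaginary trace\<close>
  finally have "Re (cnj (trace (?H ** ?O))) = Re (- trace (?H ** ?O))"
    by (rule arg_cong)
  then have "Re (trace (?H ** ?O)) = 0"
    by simp
  then have "rinner g (y ** ?O) = 0"
    by (simp add: rinner_eq_Re_trace matrix_mul_assoc)
  then show ?thesis
    by (simp add: projH_def rinner_diff_right)
qed

lemma cg_coeff_projH:
  assumes "full_rank y" and "horizontal y g"
  shows "cg_coeff pr g (projH y g') g'' = cg_coeff pr g g' g''"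
  using assms by (simp add: cg_coeff_def rinner_diff_right rinner_projH)

theorem theorem3p2:
  fixes A :: "complex^'n^'n"
    and x eta y zeta :: "nat \<Rightarrow> complex^'p^'n"
    and alpha :: "nat \<Rightarrow> real"
    and pr :: bool
  assumes herm: "hermitian A"
    and alpha_pos: "\<And>k. alpha k > 0"
    and x0: "full_rank (x 0)"
    and eta0: "eta 0 = - gradF A (x 0)"
    and x_step: "\<And>k. x (Suc k) = x k + alpha k *\<^sub>R eta k"
    and eta_step: "\<And>k. eta (Suc k) = - gradF A (x (Suc k))
                     + cg_coeff pr (gradF A (x (Suc k))) (gradF A (x k)) (gradF A (x k)) *\<^sub>R eta k"
    and y0: "y 0 = x 0"
    and zeta0: "zeta 0 = - gradF A (y 0)"
    and y_step: "\<And>k. y (Suc k) = y k + alpha k *\<^sub>R zeta k"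
    and zeta_step: "\<And>k. zeta (Suc k) = - gradF A (y (Suc k))
                     + cg_coeff pr (gradF A (y (Suc k))) (projH (y (Suc k)) (gradF A (y k))) (gradF A (y k))
                       *\<^sub>R projH (y (Suc k)) (zeta k)"
    and x_rank: "\<And>k. full_rank (x k)"
    and y_rank: "\<And>k. full_rank (y k)"
    and x_denom: "\<And>k. rinner (gradF A (x k)) (gradF A (x k)) \<noteq> 0"
    and y_denom: "\<And>k. rinner (gradF A (y k)) (gradF A (y k)) \<noteq> 0"
  shows "\<forall>k. y k = x k \<and> zeta k = eta k"
proof -
  have "y k = x k \<and> zeta k = eta k \<and> horizontal (y k) (zeta k)" for k
  proof (induction k)
    case 0
    show ?case
      using y0 zeta0 eta0 horizontal_uminus[OF horizontal_gradF[OF herm]] by simp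
  next
    case (Suc k)
    let ?g = "gradF A (y (Suc k))"
    have zeta_horizontal: "horizontal (y (Suc k)) (zeta k)"
      unfolding y_step using Suc.IH by (blast intro: horizontal_along)
    have g_horizontal: "horizontal (y (Suc k)) ?g"
      by (rule horizontal_gradF[OF herm])
    have zeta_Suc: "zeta (Suc k) = - ?g + cg_coeff pr ?g (gradF A (y k)) (gradF A (y k)) *\<^sub>R zeta k"
      by (simp add: zeta_step projH_horizontal[OF y_rank zeta_horizontal]
          cg_coeff_projH[OF y_rank g_horizontal])
    have "horizontal (y (Suc k)) (zeta (Suc k))"
      unfolding zeta_Suc by (intro horizontal_add horizontal_uminus horizontal_scaleR g_horizontal zeta_horizontal)
    then show ?case
      using Suc.IH zeta_Suc by (simp add: y_step x_step eta_step)
  qed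
  then show ?thesis
    by blast
qed

end
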